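(* Let $h\in\mathbb N$, $u,v\in\mathfrak S_n$, and let $F$ be an $h$-flipclass of paths from $u$ to $v$. Then every vertex $(x,i)$ of $TS_F$ with $i>1$ has in-degree at least $2$ in $TS_F$, and every vertex $(x,i)$ of $TS_F$ with $i<h-1$ has out-degree at least $2$ in $TS_F$.
   Context: $\mathfrak S_n$ is the symmetric group on $[n]$, $T$ its transpositions, $\ell$ the length w.r.t. simple transpositions. The Bruhat graph $B(\mathfrak S_n)$ has an edge $x\xrightarrow{t}y$ iff $yx^{-1}=t\in T$ and $\ell(x)<\ell(y)$; $P_h(u,v)$ is the set of paths $u=x_0\to\cdots\to x_h=v$ of length $h$. Between two fixed vertices there are $0$ or $2$ paths of length $2$, each the flip of the other; the $i$-th flip operator $f_i$ ($i\in[h-1]$) on $P_h(u,v)$ replaces $x_{i-1}\to x_i\to x_{i+1}$ by its flip; the orbits of $\langle f_1,\dots,f_{h-1}\rangle$ on $P_h(u,v)$ are the $h$-flipclasses of paths from $u$ to $v$. The time-support graph $TS_F$ of such $F$ has vertices $(a,i)$ ($0\le i\le h$) such that some path $(x_0,\dots,x_h)\in F$ has $x_i=a$, and edges $(a,i)\xrightarrow{t}(b,i+1)$ whenever some path of $F$ contains the edge $x_i=a\xrightarrow{t}b=x_{i+1}$. *)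

theory Defs
  imports "HOL-Combinatorics.Combinatorics"
begin

definition Sym :: "nat \<Rightarrow> (nat \<Rightarrow> nat) set" where
  "Sym n = {x. x permutes {1..n}}"

definition Transp :: "nat \<Rightarrow> (nat \<Rightarrow> nat) set" where
  "Transp n = {transpose a b | a b. a \<in> {1..n} \<and> b \<in> {1..n} \<and> a \<noteq> b}"

definition coxlen :: "nat \<Rightarrow> (nat \<Rightarrow> nat) \<Rightarrow> nat" where
  "coxlen n x = (LEAST k. \<exists>ws. length ws = k \<and> set ws \<subseteq> {1..<n} \<and>
       x = foldr (\<lambda>i f. transpose i (Suc i) \<circ> f) ws id)"

definition bedge :: "nat \<Rightarrow> (nat \<Rightarrow> nat) \<Rightarrow> (nat \<Rightarrow> nat) \<Rightarrow> (nat \<Rightarrow> nat) \<Rightarrow> bool" where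
  "bedge n x t y \<longleftrightarrow> x \<in> Sym n \<and> y \<in> Sym n \<and> t \<in> Transp n \<and> y \<circ> inv x = t
      \<and> coxlen n x < coxlen n y"

definition bedge' :: "nat \<Rightarrow> (nat \<Rightarrow> nat) \<Rightarrow> (nat \<Rightarrow> nat) \<Rightarrow> bool" where
  "bedge' n x y \<longleftrightarrow> (\<exists>t. bedge n x t y)"

definition paths :: "nat \<Rightarrow> nat \<Rightarrow> (nat \<Rightarrow> nat) \<Rightarrow> (nat \<Rightarrow> nat) \<Rightarrow> (nat \<Rightarrow> nat) list set" where
  "paths n h u v = {p. length p = Suc h \<and> p ! 0 = u \<and> p ! h = v \<and>
       (\<forall>i<h. bedge' n (p ! i) (p ! Suc i))}"

definition flip_mid :: "nat \<Rightarrow> (nat \<Rightarrow> nat) \<Rightarrow> (nat \<Rightarrow> nat) \<Rightarrow> (nat \<Rightarrow> nat) \<Rightarrow> (nat \<Rightarrow> nat)" where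
  "flip_mid n x y z = (THE y'. y' \<noteq> y \<and> bedge' n x y' \<and> bedge' n y' z)"

definition flip_op :: "nat \<Rightarrow> nat \<Rightarrow> (nat \<Rightarrow> nat) list \<Rightarrow> (nat \<Rightarrow> nat) list" where
  "flip_op n i p = p[i := flip_mid n (p ! (i - 1)) (p ! i) (p ! Suc i)]"

definition flip_step :: "nat \<Rightarrow> nat \<Rightarrow> (nat \<Rightarrow> nat) list \<Rightarrow> (nat \<Rightarrow> nat) list \<Rightarrow> bool" where
  "flip_step n h p q \<longleftrightarrow> (\<exists>i\<in>{1..h-1}. q = flip_op n i p)"

text \<open>h-flipclasses: orbits of <f_1,...,f_{h-1}> on P_h(u,v). Since each f_i is an
  involution of P_h(u,v), the orbit of p is its class under the reflexive transitive
  closure of single flips.\<close>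
definition flipclasses :: "nat \<Rightarrow> nat \<Rightarrow> (nat \<Rightarrow> nat) \<Rightarrow> (nat \<Rightarrow> nat) \<Rightarrow> (nat \<Rightarrow> nat) list set set" where
  "flipclasses n h u v = {{q. (flip_step n h)\<^sup>*\<^sup>* p q} | p. p \<in> paths n h u v}"

definition TS_vertices :: "nat \<Rightarrow> (nat \<Rightarrow> nat) list set \<Rightarrow> ((nat \<Rightarrow> nat) \<times> nat) set" where
  "TS_vertices h F = {(a, i) | a i. i \<le> h \<and> (\<exists>p\<in>F. p ! i = a)}"

definition TS_edges :: "nat \<Rightarrow> (nat \<Rightarrow> nat) list set \<Rightarrow>
    (((nat \<Rightarrow> nat) \<times> nat) \<times> (nat \<Rightarrow> nat) \<times> ((nat \<Rightarrow> nat) \<times> nat)) set" where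
  "TS_edges h F = {((a, i), t, (b, Suc i)) | a b t i. i < h \<and>
       (\<exists>p\<in>F. p ! i = a \<and> p ! Suc i = b \<and> t = b \<circ> inv a)}"

definition TS_indeg :: "nat \<Rightarrow> (nat \<Rightarrow> nat) list set \<Rightarrow> (nat \<Rightarrow> nat) \<times> nat \<Rightarrow> nat" where
  "TS_indeg h F w = card {e \<in> TS_edges h F. snd (snd e) = w}"

definition TS_outdeg :: "nat \<Rightarrow> (nat \<Rightarrow> nat) list set \<Rightarrow> (nat \<Rightarrow> nat) \<times> nat \<Rightarrow> nat" where
  "TS_outdeg h F w = card {e \<in> TS_edges h F. fst e = w}"

end

theory Submission
  imports Defs
begin

(* A vertex (x, i) of TS_F lies on some path q of F. Flipping q at position i - 1 (resp. i + 1)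
   gives another path of F that still passes through x at time i but has a different vertex at
   time i - 1 (resp. i + 1), hence a second edge into (resp. out of) (x, i).
   The substance is that flips are well defined. Identifying the Coxeter length with the number
   of inversions, the Bruhat edges become x -> x (p q) with p < q and x p < x q; a case analysis
   of the ways to write a product of two transpositions as such a product then shows that every
   Bruhat path x -> y -> z has exactly one companion path x -> y' -> z. *)

section \<open>Inversions and Coxeter length\<close>

definition inversions :: "nat \<Rightarrow> (nat \<Rightarrow> nat) \<Rightarrow> (nat \<times> nat) set" where
  "inversions n x = {(i, j). i \<in> {1..n} \<and> j \<in> {1..n} \<and> i < j \<and> x j < x i}"

definition ninversions :: "nat \<Rightarrow> (nat \<Rightarrow> nat) \<Rightarrow> nat" where
  "ninversions n x = card (inversions n x)"

lemma finite_inversions: "finite (inversions n x)"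
  by (rule finite_subset[of _ "{1..n} \<times> {1..n}"]) (auto simp: inversions_def)

lemma ninversions_id [simp]: "ninversions n id = 0"
proof -
  have "inversions n id = {}" by (auto simp: inversions_def)
  then show ?thesis by (simp add: ninversions_def)
qed

lemma ninversions_less_comp_transpose:
  assumes x: "x permutes {1..n}" and pq: "1 \<le> p" "p < q" "q \<le> n" "x p < x q"
  shows "ninversions n x < ninversions n (x \<circ> transpose p q)"
proof -
  let ?t = "transpose p q"
  \<comment> \<open>An injection of the inversions of x into those of x \<circ> (p q) missing (p, q):
      pairs with an entry strictly between p and q are kept, all others are moved by (p q).\<close>
  define f where "f = (\<lambda>(i::nat, j::nat).
    if (p < i \<and> i < q) \<or> (p < j \<and> j < q) then (i, j) else (?t i, ?t j))"
  have "f (f v) = v" for v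
    by (cases v) (auto simp: f_def transpose_def)
  then have inj_f: "inj_on f (inversions n x)"
    by (metis inj_on_inverseI)
  have x_neq: "x a \<noteq> x b" if "a \<noteq> b" for a b
    using permutes_inj[OF x] that by (meson injD)
  have image: "f ` inversions n x \<subseteq> inversions n (x \<circ> ?t) - {(p, q)}"
  proof
    fix v assume "v \<in> f ` inversions n x"
    then obtain i j where ij: "(i, j) \<in> inversions n x" and v: "v = f (i, j)" by auto
    from ij have "1 \<le> i" "i < j" "j \<le> n" "x j < x i" by (auto simp: inversions_def)
    then show "v \<in> inversions n (x \<circ> ?t) - {(p, q)}"
      using pq x_neq[of i p] x_neq[of i q] x_neq[of j p] x_neq[of j q]
      unfolding v f_def inversions_def by (auto simp: transpose_def split: if_splits)
  qed
  have "(p, q) \<in> inversions n (x \<circ> ?t)"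
    using pq by (auto simp: inversions_def)
  then have "card (inversions n (x \<circ> ?t) - {(p, q)}) < ninversions n (x \<circ> ?t)"
    unfolding ninversions_def by (metis card_Diff1_less finite_inversions)
  moreover have "ninversions n x \<le> card (inversions n (x \<circ> ?t) - {(p, q)})"
    unfolding ninversions_def card_image[OF inj_f, symmetric]
    by (rule card_mono[OF _ image]) (simp add: finite_inversions)
  ultimately show ?thesis by linarith
qed

lemma ninversions_transpose_Suc_comp_le:
  assumes x: "x permutes {1..n}"
  shows "ninversions n (transpose k (Suc k) \<circ> x) \<le> ninversions n x + 1"
proof -
  define P where "P = inv x k"
  define Q where "Q = inv x (Suc k)"
  have "x P = k" "x Q = Suc k"
    unfolding P_def Q_def using x by (auto simp: permutes_inverses)
  have sub: "inversions n (transpose k (Suc k) \<circ> x) \<subseteq> insert (min P Q, max P Q) (inversions n x)"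
  proof
    fix v assume v: "v \<in> inversions n (transpose k (Suc k) \<circ> x)"
    then obtain i j where ij: "v = (i, j)" "i < j" by (auto simp: inversions_def)
    show "v \<in> insert (min P Q, max P Q) (inversions n x)"
    proof (cases "{x i, x j} = {k, Suc k}")
      case True
      then have "x i = x P \<and> x j = x Q \<or> x i = x Q \<and> x j = x P"
        unfolding \<open>x P = k\<close> \<open>x Q = Suc k\<close> by (simp add: doubleton_eq_iff)
      then have "i = P \<and> j = Q \<or> i = Q \<and> j = P"
        using permutes_inj[OF x] by (auto dest: injD)
      then show ?thesis using ij by auto
    next
      case False
      have "transpose k (Suc k) (x j) < transpose k (Suc k) (x i)"
        using v ij by (simp add: inversions_def)
      with False have "x j < x i"
        by (auto simp: transpose_def doubleton_eq_iff split: if_splits)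
      then show ?thesis using v ij by (simp add: inversions_def)
    qed
  qed
  have "ninversions n (transpose k (Suc k) \<circ> x) \<le> card (insert (min P Q, max P Q) (inversions n x))"
    unfolding ninversions_def by (rule card_mono[OF _ sub]) (simp add: finite_inversions)
  also have "\<dots> \<le> ninversions n x + 1"
    unfolding ninversions_def by (simp add: card_insert_if finite_inversions)
  finally show ?thesis .
qed

definition simple_word :: "nat list \<Rightarrow> nat \<Rightarrow> nat" where
  "simple_word ws = foldr (\<lambda>i f. transpose i (Suc i) \<circ> f) ws id"

lemma simple_word_Nil [simp]: "simple_word [] = id"
  by (simp add: simple_word_def)

lemma simple_word_Cons [simp]: "simple_word (i # ws) = transpose i (Suc i) \<circ> simple_word ws"
  by (simp add: simple_word_def)

lemma simple_word_append: "simple_word (ws @ vs) = simple_word ws \<circ> simple_word vs"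
  by (induction ws) (simp_all add: comp_assoc)

lemma simple_word_permutes: "set ws \<subseteq> {1..<n} \<Longrightarrow> simple_word ws permutes {1..n}"
  by (induction ws) (auto intro!: permutes_compose permutes_swap_id)

lemma ninversions_simple_word_le: "set ws \<subseteq> {1..<n} \<Longrightarrow> ninversions n (simple_word ws) \<le> length ws"
proof (induction ws)
  case (Cons i ws)
  then have "ninversions n (simple_word ws) \<le> length ws" by simp
  moreover have "ninversions n (transpose i (Suc i) \<circ> simple_word ws) \<le> ninversions n (simple_word ws) + 1"
    using Cons.prems by (intro ninversions_transpose_Suc_comp_le simple_word_permutes) simp
  ultimately show ?case unfolding simple_word_Cons list.size by linarith
qed simp

lemma permutes_neq_id_descent:
  assumes x: "x permutes {1..n}" and "x \<noteq> id"
  shows "\<exists>k. 1 \<le> k \<and> k < n \<and> x (Suc k) < x k"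
proof -
  have "\<exists>k. x k \<noteq> k" using \<open>x \<noteq> id\<close> eq_id_iff by blast
  then obtain k where k: "x k \<noteq> k" and below: "\<And>j. j < k \<Longrightarrow> x j = j"
    using exists_least_iff[of "\<lambda>k. x k \<noteq> k"] by blast
  define m where "m = inv x k"
  have "x m = k" unfolding m_def using x by (simp add: permutes_inverses)
  have inj: "x a = x b \<Longrightarrow> a = b" for a b using permutes_inj[OF x] by (meson injD)
  have "k < x k"
  proof (rule ccontr)
    assume "\<not> k < x k"
    with k have "x (x k) = x k" by (intro below) simp
    with inj k show False by blast
  qed
  have "m \<noteq> k" using k \<open>x m = k\<close> by auto
  have "k < m"
  proof (rule ccontr)
    assume "\<not> k < m"
    with \<open>m \<noteq> k\<close> have "x m = m" by (intro below) simp
    with \<open>x m = k\<close> \<open>m \<noteq> k\<close> show False by simp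
  qed
  have "m \<in> {1..n}" "k \<in> {1..n}"
    using permutes_not_in[OF x] \<open>x m = k\<close> \<open>m \<noteq> k\<close> k by metis+
  show ?thesis
  proof (rule ccontr)
    assume no_descent: "\<not> ?thesis"
    have "x j \<le> x (Suc j)" if "j \<in> {k..<m}" for j
    proof -
      have "1 \<le> j" "j < n" using that \<open>m \<in> {1..n}\<close> \<open>k \<in> {1..n}\<close> by auto
      with no_descent show ?thesis by (meson not_less)
    qed
    then have "x k \<le> x m"
      using lift_Suc_mono_le_ivl[of "{k..<m}" x k m] \<open>k < m\<close> by simp
    with \<open>k < x k\<close> \<open>x m = k\<close> show False by simp
  qed
qed

lemma ex_simple_word:
  "x permutes {1..n} \<Longrightarrow> \<exists>ws. set ws \<subseteq> {1..<n} \<and> length ws \<le> ninversions n x \<and> x = simple_word ws"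
proof (induction "ninversions n x" arbitrary: x rule: less_induct)
  case less
  show ?case
  proof (cases "x = id")
    case False
    then obtain k where k: "1 \<le> k" "k < n" "x (Suc k) < x k"
      using permutes_neq_id_descent less.prems by blast
    define y where "y = x \<circ> transpose k (Suc k)"
    have y: "y permutes {1..n}"
      using k less.prems by (auto simp: y_def intro!: permutes_compose permutes_swap_id)
    have x: "x = y \<circ> transpose k (Suc k)"
      by (simp add: y_def comp_assoc)
    have "ninversions n y < ninversions n (y \<circ> transpose k (Suc k))"
      using k by (intro ninversions_less_comp_transpose[OF y]) (auto simp: y_def)
    then have less_x: "ninversions n y < ninversions n x" using x by simp
    then obtain ws where "set ws \<subseteq> {1..<n}" "length ws \<le> ninversions n y" "y = simple_word ws"
      using less.hyps y by blast
    with k x less_x show ?thesis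
      by (intro exI[of _ "ws @ [k]"]) (auto simp: simple_word_append)
  qed (intro exI[of _ "[]"]; simp)
qed

lemma coxlen_eq_ninversions:
  assumes "x permutes {1..n}"
  shows "coxlen n x = ninversions n x"
  unfolding coxlen_def simple_word_def[symmetric]
proof (rule Least_equality)
  obtain ws where ws: "set ws \<subseteq> {1..<n}" "length ws \<le> ninversions n x" "x = simple_word ws"
    using ex_simple_word[OF assms] by blast
  with ninversions_simple_word_le[OF ws(1)] show
    "\<exists>ws. length ws = ninversions n x \<and> set ws \<subseteq> {1..<n} \<and> x = simple_word ws"
    by (intro exI[of _ ws]) simp
qed (use ninversions_simple_word_le in blast)

section \<open>Bruhat edges\<close>

definition bruhat_step :: "nat \<Rightarrow> (nat \<Rightarrow> nat) \<Rightarrow> (nat \<Rightarrow> nat) \<Rightarrow> bool" where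
  "bruhat_step n x y \<longleftrightarrow> (\<exists>p q. 1 \<le> p \<and> p < q \<and> q \<le> n \<and> x p < x q \<and> y = x \<circ> transpose p q)"

definition bruhat_ascent :: "(nat \<Rightarrow> nat) \<Rightarrow> nat \<Rightarrow> nat \<Rightarrow> bool" where
  "bruhat_ascent x a b \<longleftrightarrow> (a < b \<longleftrightarrow> x a < x b)"

lemma inj_comp_cancel_left: "inj x \<Longrightarrow> x \<circ> f = x \<circ> g \<Longrightarrow> f = g"
  by (rule ext) (metis comp_apply injD)

lemma transpose_eq_imp_doubleton_eq:
  assumes "transpose a b = transpose p q" "a \<noteq> b"
  shows "{a, b} = {p, q}"
proof -
  have "transpose p q a = b" "transpose p q b = a"
    using assms(1) by (metis transpose_apply_first transpose_apply_second)+
  with assms(2) show ?thesis by (auto simp: transpose_eq_iff)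
qed

lemma bruhat_step_permutes: "x permutes {1..n} \<Longrightarrow> bruhat_step n x y \<Longrightarrow> y permutes {1..n}"
  unfolding bruhat_step_def by (auto intro!: permutes_compose permutes_swap_id)

lemma bruhat_step_ninversions_less:
  "x permutes {1..n} \<Longrightarrow> bruhat_step n x y \<Longrightarrow> ninversions n x < ninversions n y"
  unfolding bruhat_step_def using ninversions_less_comp_transpose by blast

lemma bruhat_step_comp_transpose_iff:
  assumes x: "x permutes {1..n}" and "a \<noteq> b"
  shows "bruhat_step n x (x \<circ> transpose a b) \<longleftrightarrow>
    a \<in> {1..n} \<and> b \<in> {1..n} \<and> bruhat_ascent x a b"
proof
  assume "bruhat_step n x (x \<circ> transpose a b)"
  then obtain p q where pq: "1 \<le> p" "p < q" "q \<le> n" "x p < x q"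
    and eq: "x \<circ> transpose a b = x \<circ> transpose p q"
    unfolding bruhat_step_def by blast
  have "transpose a b = transpose p q"
    using inj_comp_cancel_left[OF permutes_inj[OF x] eq] .
  then have "{a, b} = {p, q}"
    using \<open>a \<noteq> b\<close> by (rule transpose_eq_imp_doubleton_eq)
  with pq show "a \<in> {1..n} \<and> b \<in> {1..n} \<and> bruhat_ascent x a b"
    by (auto simp: doubleton_eq_iff bruhat_ascent_def)
next
  assume ab: "a \<in> {1..n} \<and> b \<in> {1..n} \<and> bruhat_ascent x a b"
  have "x a \<noteq> x b" using \<open>a \<noteq> b\<close> permutes_inj[OF x] by (metis injD)
  have "transpose a b = transpose (min a b) (max a b)"
    by (simp add: min_def max_def transpose_commute)
  moreover have "x (min a b) < x (max a b)"
    using ab \<open>a \<noteq> b\<close> \<open>x a \<noteq> x b\<close> by (auto simp: min_def max_def bruhat_ascent_def)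
  ultimately show "bruhat_step n x (x \<circ> transpose a b)"
    unfolding bruhat_step_def using ab \<open>a \<noteq> b\<close>
    by (intro exI[of _ "min a b"] exI[of _ "max a b"]) auto
qed

lemma bruhat_step_if_bedge':
  assumes "bedge' n x y"
  shows "bruhat_step n x y"
proof -
  from assms obtain t where x: "x permutes {1..n}" and y: "y permutes {1..n}" and "t \<in> Transp n"
    and "y \<circ> inv x = t" and longer: "coxlen n x < coxlen n y"
    unfolding bedge'_def bedge_def Sym_def by auto
  then have "y = t \<circ> x"
    by (metis comp_assoc comp_id permutes_inv_o(2)[OF x])
  moreover obtain a b where ab: "a \<in> {1..n}" "b \<in> {1..n}" "a \<noteq> b" and "t = transpose a b"
    using \<open>t \<in> Transp n\<close> unfolding Transp_def by blast
  ultimately have "y = transpose a b \<circ> x" by simp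
  also have "transpose a b \<circ> x = x \<circ> transpose (inv x a) (inv x b)"
    by (rule transpose_comp_eq) (rule permutes_bij[OF x])
  finally have y_eq: "y = x \<circ> transpose (inv x a) (inv x b)" .
  define a' b' where "a' = inv x a" and "b' = inv x b"
  have "a' \<in> {1..n}" "b' \<in> {1..n}" "a' \<noteq> b'"
    using ab permutes_inv[OF x] unfolding a'_def b'_def
    by (auto dest: permutes_in_image permutes_inj injD)
  have "bruhat_ascent x a' b'"
  proof (rule ccontr)
    assume "\<not> bruhat_ascent x a' b'"
    moreover have "x a' \<noteq> x b'" using \<open>a' \<noteq> b'\<close> permutes_inj[OF x] by (metis injD)
    ultimately have "bruhat_ascent y a' b'" unfolding y_eq a'_def b'_def bruhat_ascent_def by auto
    moreover have "x = y \<circ> transpose a' b'" unfolding y_eq a'_def b'_def by (simp add: fun_eq_iff)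
    ultimately have "bruhat_step n y x"
      using bruhat_step_comp_transpose_iff[OF y \<open>a' \<noteq> b'\<close>] \<open>a' \<in> {1..n}\<close> \<open>b' \<in> {1..n}\<close> by simp
    with longer show False
      using bruhat_step_ninversions_less[OF y] coxlen_eq_ninversions[OF x] coxlen_eq_ninversions[OF y]
      by fastforce
  qed
  then show ?thesis
    using bruhat_step_comp_transpose_iff[OF x \<open>a' \<noteq> b'\<close>] \<open>a' \<in> {1..n}\<close> \<open>b' \<in> {1..n}\<close>
    unfolding y_eq a'_def b'_def by simp
qed

lemma bedge'_if_bruhat_step:
  assumes x: "x permutes {1..n}" and step: "bruhat_step n x y"
  shows "bedge' n x y"
proof -
  obtain p q where pq: "1 \<le> p" "p < q" "q \<le> n" "x p < x q" and y_eq: "y = x \<circ> transpose p q"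
    using step unfolding bruhat_step_def by blast
  have y: "y permutes {1..n}" by (rule bruhat_step_permutes[OF x step])
  have "transpose (x p) (x q) \<circ> x = x \<circ> transpose p q"
    using transpose_comp_eq[OF permutes_bij[OF x]] permutes_inverses(2)[OF x] by simp
  then have "y \<circ> inv x = transpose (x p) (x q)"
    unfolding y_eq by (metis comp_assoc comp_id permutes_inv_o(1)[OF x])
  moreover have "transpose (x p) (x q) \<in> Transp n"
    using pq permutes_in_image[OF x] unfolding Transp_def by fastforce
  moreover have "coxlen n x < coxlen n y"
    using bruhat_step_ninversions_less[OF x step]
    by (simp add: coxlen_eq_ninversions[OF x] coxlen_eq_ninversions[OF y])
  ultimately show ?thesis
    using x y unfolding bedge'_def bedge_def Sym_def by blast
qed

lemma bedge'_iff_bruhat_step: "bedge' n x y \<longleftrightarrow> x \<in> Sym n \<and> bruhat_step n x y"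
  using bruhat_step_if_bedge' bedge'_if_bruhat_step unfolding bedge'_def bedge_def Sym_def by blast

section \<open>Bruhat paths of length two\<close>

lemma transpose_comp_transpose_neq_mixed:
  assumes d: "distinct [p, q, p', q']" and a: "a \<in> {p, q}" and b: "b \<in> {p', q'}"
  shows "transpose p q \<circ> transpose p' q' \<noteq> transpose a b \<circ> transpose r s"
proof
  assume E: "transpose p q \<circ> transpose p' q' = transpose a b \<circ> transpose r s"
  have E': "transpose p q (transpose p' q' m) = transpose a b (transpose r s m)" for m
    using E by (metis comp_apply)
  define a' b' where "a' = transpose p q a" and "b' = transpose p' q' b"
  have a': "a' \<noteq> a" "a' \<noteq> b" "a' \<in> {p, q}" and b': "b' \<noteq> a" "b' \<noteq> b" "b' \<in> {p', q'}"
    unfolding a'_def b'_def using a b d by auto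
  have "transpose a b (transpose r s a) = a'"
    using E'[of a] a d unfolding a'_def by auto
  then have ra: "transpose r s a = a'"
    using a' by (metis transpose_apply_other transpose_involutory)
  have "transpose a b (transpose r s b) = b'"
    using E'[of b] b d unfolding b'_def by auto
  then have rb: "transpose r s b = b'"
    using b' by (metis transpose_apply_other transpose_involutory)
  have "a \<in> {r, s}" "a' \<in> {r, s}" "b \<in> {r, s}"
    using ra rb a' b' by (metis insertCI transpose_apply_other transpose_involutory)+
  moreover have "a \<noteq> b" using a b d by auto
  ultimately show False using a' by auto
qed

lemma transpose_comp_transpose_eq_cases:
  assumes "p \<noteq> q" "p' \<noteq> q'" "r \<noteq> s" "r' \<noteq> s'" and t12: "transpose p q \<noteq> transpose p' q'"
    and E: "transpose p q \<circ> transpose p' q' = transpose r s \<circ> transpose r' s'"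
  shows "transpose r s \<in>
    {transpose p q, transpose p' q', transpose (transpose p q p') (transpose p q q')}"
proof -
  have E': "transpose p q (transpose p' q' m) = transpose r s (transpose r' s' m)" for m
    using E by (metis comp_apply)
  have "transpose r s \<noteq> transpose r' s'"
  proof
    assume "transpose r s = transpose r' s'"
    then have "transpose p q \<circ> transpose p' q' = id" using E by simp
    then have "transpose p q = transpose p' q'"
      by (metis comp_id fun.map_comp transpose_comp_involutory)
    with t12 show False ..
  qed
  then have moved: "transpose r s (transpose r' s' m) \<noteq> m" if "m \<in> {r, s}" for m
    using that \<open>r \<noteq> s\<close> \<open>r' \<noteq> s'\<close>
    by (auto simp: fun_eq_iff transpose_def split: if_splits)
  have rs: "m \<in> {p, q, p', q'}" if "m \<in> {r, s}" for m
  proof (rule ccontr)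
    assume "m \<notin> {p, q, p', q'}"
    then have "transpose p q (transpose p' q' m) = m" by simp
    with moved[OF that] E'[of m] show False by simp
  qed
  show ?thesis
  proof (cases "distinct [p, q, p', q']")
    case True
    have "\<not> (r \<in> {p, q} \<and> s \<in> {p', q'})" "\<not> (s \<in> {p, q} \<and> r \<in> {p', q'})"
      using transpose_comp_transpose_neq_mixed[OF True] E by (metis transpose_commute)+
    with rs[of r] rs[of s] \<open>r \<noteq> s\<close> show ?thesis
      by (auto simp: transpose_commute)
  next
    case False
    then consider "p = p'" "q \<noteq> q'" | "p = q'" "q \<noteq> p'" | "q = p'" "p \<noteq> q'" | "q = q'" "p \<noteq> p'"
      using \<open>p \<noteq> q\<close> \<open>p' \<noteq> q'\<close> t12 by (cases "q = p'"; cases "p = q'") (auto simp: transpose_commute)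
    then show ?thesis
      using rs[of r] rs[of s] \<open>p \<noteq> q\<close> \<open>p' \<noteq> q'\<close> \<open>r \<noteq> s\<close>
      by cases (auto simp: transpose_commute)
  qed
qed

(* With t1 = (p q) and t2 = (p' q'), the two sides are the conditions for the paths
   x -> x t2 -> x t1 t2 and x -> x t1 t2 t1 -> x t1 t2 to be Bruhat paths. *)
lemma overlapping_transpositions_ascent_xor:
  assumes "p \<noteq> q" "p' \<noteq> q'" "transpose p q \<noteq> transpose p' q'" "{p, q} \<inter> {p', q'} \<noteq> {}"
    and "inj_on x {p, q, p', q'}"
    and "bruhat_ascent x p q" "bruhat_ascent (x \<circ> transpose p q) p' q'"
  shows "bruhat_ascent x p' q' \<and>
      bruhat_ascent (x \<circ> transpose p' q') (transpose p' q' p) (transpose p' q' q) \<longleftrightarrow>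
    \<not> (bruhat_ascent x (transpose p q p') (transpose p q q') \<and>
      bruhat_ascent (x \<circ> transpose (transpose p q p') (transpose p q q')) p q)"
proof -
  have x_neq: "x a \<noteq> x b" if "a \<in> {p, q, p', q'}" "b \<in> {p, q, p', q'}" "a \<noteq> b" for a b
    using assms(5) that by (meson inj_onD)
  consider "p = p'" | "p = q'" | "q = p'" | "q = q'" using assms(4) by blast
  then show ?thesis
  proof cases
    case 1
    with assms(1-3,6,7) x_neq[of q q'] x_neq[of p q'] x_neq[of p q] show ?thesis
      by (auto simp: bruhat_ascent_def transpose_def)
  next
    case 2
    with assms(1-3,6,7) x_neq[of q p'] x_neq[of p p'] x_neq[of p q] show ?thesis
      by (auto simp: bruhat_ascent_def transpose_def)
  next
    case 3
    with assms(1-3,6,7) x_neq[of p q'] x_neq[of q q'] x_neq[of p q] show ?thesis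
      by (auto simp: bruhat_ascent_def transpose_def)
  next
    case 4
    with assms(1-3,6,7) x_neq[of p p'] x_neq[of q p'] x_neq[of p q] show ?thesis
      by (auto simp: bruhat_ascent_def transpose_def)
  qed
qed

lemma disjoint_transpositions_ascent:
  assumes "{p, q} \<inter> {p', q'} = {}"
    and "bruhat_ascent x p q" "bruhat_ascent (x \<circ> transpose p q) p' q'"
  shows "bruhat_ascent x p' q' \<and>
    bruhat_ascent (x \<circ> transpose p' q') (transpose p' q' p) (transpose p' q' q)"
proof -
  have "transpose p q p' = p'" "transpose p q q' = q'" "transpose p' q' p = p" "transpose p' q' q = q"
    using assms(1) by auto
  with assms(2,3) show ?thesis by (simp add: bruhat_ascent_def)
qed

lemma transpose_neq_of_bruhat_ascents:
  assumes "inj x" "p \<noteq> q" "p' \<noteq> q'"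
    and "bruhat_ascent x p q" "bruhat_ascent (x \<circ> transpose p q) p' q'"
  shows "transpose p q \<noteq> transpose p' q'"
proof
  assume "transpose p q = transpose p' q'"
  then have "{p', q'} = {p, q}"
    using \<open>p' \<noteq> q'\<close> by (metis transpose_eq_imp_doubleton_eq)
  moreover have "x p \<noteq> x q" using assms(1,2) by (meson injD)
  ultimately show False using assms(2,4,5) by (auto simp: bruhat_ascent_def doubleton_eq_iff)
qed

lemma transpose_conj_neq:
  assumes "transpose p q \<noteq> transpose p' q'"
  shows "transpose (transpose p q p') (transpose p q q') \<noteq> transpose p q"
proof
  assume "transpose (transpose p q p') (transpose p q q') = transpose p q"
  then have "transpose p q \<circ> transpose p' q' = transpose p q \<circ> transpose p q"
    using transpose_comp_eq[of "transpose p q" "transpose p q p'" "transpose p q q'"] by simp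
  then have "transpose p' q' = transpose p q"
    by (rule inj_comp_cancel_left[OF inj_transpose])
  with assms show False by simp
qed

lemma bruhat_two_steps_iff:
  assumes x: "x permutes {1..n}" and "a \<in> {1..n}" "b \<in> {1..n}" "a \<noteq> b" "c \<noteq> d"
  shows "bruhat_step n x (x \<circ> transpose a b) \<and>
      bruhat_step n (x \<circ> transpose a b) (x \<circ> transpose a b \<circ> transpose c d) \<longleftrightarrow>
    c \<in> {1..n} \<and> d \<in> {1..n} \<and> bruhat_ascent x a b \<and> bruhat_ascent (x \<circ> transpose a b) c d"
proof -
  have "x \<circ> transpose a b permutes {1..n}"
    using x assms(2,3) by (auto intro!: permutes_compose permutes_swap_id)
  then show ?thesis
    using bruhat_step_comp_transpose_iff[OF x \<open>a \<noteq> b\<close>] assms(2,3)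
      bruhat_step_comp_transpose_iff[of "x \<circ> transpose a b" n c d] \<open>c \<noteq> d\<close>
    by blast
qed

lemma bruhat_middle_vertex_cases:
  assumes x: "inj x" and "p \<noteq> q" "p' \<noteq> q'" "transpose p q \<noteq> transpose p' q'"
    and "bruhat_step n x w" "bruhat_step n w (x \<circ> transpose p q \<circ> transpose p' q')"
  shows "w \<in> {x \<circ> transpose p q, x \<circ> transpose p' q',
    x \<circ> transpose (transpose p q p') (transpose p q q')}"
proof -
  obtain r s where "r \<noteq> s" and w: "w = x \<circ> transpose r s"
    using assms(5) unfolding bruhat_step_def by (metis less_irrefl)
  obtain r' s' where "r' \<noteq> s'" and "x \<circ> transpose p q \<circ> transpose p' q' = w \<circ> transpose r' s'"
    using assms(6) unfolding bruhat_step_def by (metis less_irrefl)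
  with w have "x \<circ> (transpose p q \<circ> transpose p' q') = x \<circ> (transpose r s \<circ> transpose r' s')"
    by (simp add: comp_assoc)
  then have "transpose p q \<circ> transpose p' q' = transpose r s \<circ> transpose r' s'"
    by (rule inj_comp_cancel_left[OF x])
  then have "transpose r s \<in>
      {transpose p q, transpose p' q', transpose (transpose p q p') (transpose p q q')}"
    by (rule transpose_comp_transpose_eq_cases[OF assms(2,3) \<open>r \<noteq> s\<close> \<open>r' \<noteq> s'\<close> assms(4)])
  then show ?thesis unfolding w by auto
qed

lemma card_bruhat_middle_vertices:
  assumes x: "x permutes {1..n}" and "bruhat_step n x y" "bruhat_step n y z"
  shows "card {w. bruhat_step n x w \<and> bruhat_step n w z} = 2"
proof -
  obtain p q where "p \<noteq> q" and y: "y = x \<circ> transpose p q"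
    using assms(2) unfolding bruhat_step_def by (metis less_irrefl)
  obtain p' q' where "p' \<noteq> q'" and "z = y \<circ> transpose p' q'"
    using assms(3) unfolding bruhat_step_def by (metis less_irrefl)
  with y have z: "z = x \<circ> transpose p q \<circ> transpose p' q'" by simp
  have "y permutes {1..n}" by (rule bruhat_step_permutes[OF x assms(2)])
  then have range: "p \<in> {1..n}" "q \<in> {1..n}" "p' \<in> {1..n}" "q' \<in> {1..n}"
    and ascent: "bruhat_ascent x p q" "bruhat_ascent (x \<circ> transpose p q) p' q'"
    using assms(2,3) bruhat_step_comp_transpose_iff[OF x \<open>p \<noteq> q\<close>]
      bruhat_step_comp_transpose_iff[of y n p' q'] \<open>p' \<noteq> q'\<close> unfolding y z by auto
  define t1 t2 t3 where "t1 = transpose p q" and "t2 = transpose p' q'"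
    and "t3 = transpose (t1 p') (t1 q')"
  let ?M = "{w. bruhat_step n x w \<and> bruhat_step n w z}"
  have inj: "inj x" by (rule permutes_inj[OF x])
  have "t1 \<noteq> t2"
    unfolding t1_def t2_def by (rule transpose_neq_of_bruhat_ascents[OF inj \<open>p \<noteq> q\<close> \<open>p' \<noteq> q'\<close> ascent])
  then have "t3 \<noteq> t1"
    unfolding t1_def t2_def t3_def by (rule transpose_conj_neq)
  have "t1 \<circ> t2 = t2 \<circ> transpose (t2 p) (t2 q)" "t1 \<circ> t2 = t3 \<circ> t1"
    using transpose_comp_eq[of t2 p q] transpose_comp_eq[of t1 "t1 p'" "t1 q'"]
    unfolding t1_def t2_def t3_def by simp_all
  then have zA: "z = x \<circ> t2 \<circ> transpose (t2 p) (t2 q)" and zB: "z = x \<circ> t3 \<circ> t1"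
    unfolding z t1_def t2_def by (simp_all only: comp_assoc)
  have "t1 permutes {1..n}" "t2 permutes {1..n}"
    unfolding t1_def t2_def using range by (auto intro: permutes_swap_id)
  then have range': "t2 p \<in> {1..n}" "t2 q \<in> {1..n}" "t1 p' \<in> {1..n}" "t1 q' \<in> {1..n}"
    using range by (simp_all only: permutes_in_image)
  have "t2 p \<noteq> t2 q" "t1 p' \<noteq> t1 q'"
    using \<open>p \<noteq> q\<close> \<open>p' \<noteq> q'\<close> unfolding t1_def t2_def by (auto simp: transpose_eq_iff)
  have A: "x \<circ> t2 \<in> ?M \<longleftrightarrow> bruhat_ascent x p' q' \<and> bruhat_ascent (x \<circ> t2) (t2 p) (t2 q)"
    using range range' \<open>p' \<noteq> q'\<close> \<open>t2 p \<noteq> t2 q\<close>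
    by (simp add: zA bruhat_two_steps_iff[OF x, of p' q', folded t2_def])
  have B: "x \<circ> t3 \<in> ?M \<longleftrightarrow> bruhat_ascent x (t1 p') (t1 q') \<and> bruhat_ascent (x \<circ> t3) p q"
    using range range' \<open>p \<noteq> q\<close> \<open>t1 p' \<noteq> t1 q'\<close>
    by (simp add: zB bruhat_two_steps_iff[OF x, of "t1 p'" "t1 q'" p q, folded t1_def t3_def])
  have "?M \<subseteq> {x \<circ> t1, x \<circ> t2, x \<circ> t3}"
    using bruhat_middle_vertex_cases[OF inj \<open>p \<noteq> q\<close> \<open>p' \<noteq> q'\<close>] \<open>t1 \<noteq> t2\<close>
    unfolding z t1_def t2_def t3_def by blast
  moreover have "x \<circ> t2 \<noteq> x \<circ> t1" "x \<circ> t3 \<noteq> x \<circ> t1"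
    using \<open>t1 \<noteq> t2\<close> \<open>t3 \<noteq> t1\<close> inj_comp_cancel_left[OF inj] by metis+
  moreover have "x \<circ> t2 \<in> ?M \<and> t3 = t2 \<or> (x \<circ> t2 \<in> ?M \<longleftrightarrow> x \<circ> t3 \<notin> ?M)"
  proof (cases "{p, q} \<inter> {p', q'} = {}")
    case True
    then have "t3 = t2" unfolding t1_def t2_def t3_def by auto
    with A disjoint_transpositions_ascent[OF True ascent] show ?thesis
      unfolding t1_def t2_def by blast
  next
    case False
    have "inj_on x {p, q, p', q'}" using inj by (rule inj_on_subset) simp
    from overlapping_transpositions_ascent_xor[OF \<open>p \<noteq> q\<close> \<open>p' \<noteq> q'\<close> _ False this ascent]
    have "bruhat_ascent x p' q' \<and> bruhat_ascent (x \<circ> t2) (t2 p) (t2 q) \<longleftrightarrow>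
        \<not> (bruhat_ascent x (t1 p') (t1 q') \<and> bruhat_ascent (x \<circ> t3) p q)"
      using \<open>t1 \<noteq> t2\<close> unfolding t1_def t2_def t3_def by blast
    with A B show ?thesis by blast
  qed
  moreover have "x \<circ> t1 \<in> ?M" using assms(2,3) unfolding y t1_def by simp
  ultimately have "\<exists>w. w \<noteq> x \<circ> t1 \<and> ?M = {x \<circ> t1, w}" by blast
  then show ?thesis by (metis card_2_iff)
qed

section \<open>Flips and the time-support graph\<close>

lemma flip_mid_bedge':
  assumes ab: "bedge' n a b" and bc: "bedge' n b c"
  shows "flip_mid n a b c \<noteq> b \<and> bedge' n a (flip_mid n a b c) \<and> bedge' n (flip_mid n a b c) c"
proof -
  have a: "a permutes {1..n}" and "bruhat_step n a b" "bruhat_step n b c"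
    using ab bc by (auto simp: bedge'_iff_bruhat_step Sym_def)
  let ?M = "{y. bruhat_step n a y \<and> bruhat_step n y c}"
  have "b \<in> ?M" using \<open>bruhat_step n a b\<close> \<open>bruhat_step n b c\<close> by simp
  obtain y1 y2 where "?M = {y1, y2}" "y1 \<noteq> y2"
    using card_bruhat_middle_vertices[OF a \<open>bruhat_step n a b\<close> \<open>bruhat_step n b c\<close>]
    unfolding card_2_iff by blast
  with \<open>b \<in> ?M\<close> obtain w where "w \<noteq> b" and M: "?M = {b, w}"
    by (metis insert_commute insertE singletonD)
  have "bedge' n a y \<and> bedge' n y c \<longleftrightarrow> bruhat_step n a y \<and> bruhat_step n y c" for y
    using a bruhat_step_permutes[OF a] by (auto simp: bedge'_iff_bruhat_step Sym_def)
  with M \<open>w \<noteq> b\<close> have "\<exists>!y. y \<noteq> b \<and> bedge' n a y \<and> bedge' n y c"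
    by (auto simp: set_eq_iff)
  then show ?thesis unfolding flip_mid_def by (rule theI')
qed

lemma flip_op_in_paths:
  assumes p: "p \<in> paths n h u v" and i: "i \<in> {1..h-1}"
  shows "flip_op n i p \<in> paths n h u v" and "flip_op n i p ! i \<noteq> p ! i"
proof -
  have len: "length p = Suc h" and ends: "p ! 0 = u" "p ! h = v"
    and edge: "\<And>j. j < h \<Longrightarrow> bedge' n (p ! j) (p ! Suc j)"
    using p unfolding paths_def by auto
  have "1 \<le> i" "i < h" using i by auto
  define m where "m = flip_mid n (p ! (i - 1)) (p ! i) (p ! Suc i)"
  have m: "m \<noteq> p ! i" "bedge' n (p ! (i - 1)) m" "bedge' n m (p ! Suc i)"
    using flip_mid_bedge'[of n "p ! (i - 1)" "p ! i" "p ! Suc i"]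
      edge[of "i - 1"] edge[of i] \<open>1 \<le> i\<close> \<open>i < h\<close>
    unfolding m_def by simp_all
  have flip: "flip_op n i p = p[i := m]" unfolding flip_op_def m_def ..
  have "bedge' n (p[i := m] ! j) (p[i := m] ! Suc j)" if "j < h" for j
  proof -
    consider "Suc j = i" | "j = i" | "Suc j \<noteq> i" "j \<noteq> i" by blast
    then show ?thesis
    proof cases
      case 1
      then show ?thesis using m len \<open>i < h\<close> by (auto simp: nth_list_update)
    next
      case 2
      then show ?thesis using m len \<open>i < h\<close> by simp
    next
      case 3
      then show ?thesis using edge[OF that] by simp
    qed
  qed
  with len ends \<open>1 \<le> i\<close> \<open>i < h\<close> show "flip_op n i p \<in> paths n h u v"
    unfolding flip paths_def by auto
  show "flip_op n i p ! i \<noteq> p ! i" using m len \<open>i < h\<close> unfolding flip by simp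
qed

lemma flipclass_subset_paths:
  assumes "F \<in> flipclasses n h u v"
  shows "F \<subseteq> paths n h u v"
proof
  fix q assume "q \<in> F"
  obtain p where p: "p \<in> paths n h u v" and F: "F = {q. (flip_step n h)\<^sup>*\<^sup>* p q}"
    using assms unfolding flipclasses_def by blast
  from \<open>q \<in> F\<close> have "(flip_step n h)\<^sup>*\<^sup>* p q" unfolding F by simp
  then show "q \<in> paths n h u v"
  proof (induction rule: rtranclp_induct)
    case (step q r)
    then show ?case unfolding flip_step_def using flip_op_in_paths(1) by blast
  qed (rule p)
qed

lemma flipclass_flip_op_closed:
  assumes "F \<in> flipclasses n h u v" "q \<in> F" "i \<in> {1..h-1}"
  shows "flip_op n i q \<in> F"
proof -
  have "flip_step n h q (flip_op n i q)" unfolding flip_step_def using assms(3) by blast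
  with assms(1,2) show ?thesis
    unfolding flipclasses_def by (auto intro: rtranclp.rtrancl_into_rtrancl)
qed

lemma finite_TS_edges:
  assumes "F \<subseteq> paths n h u v"
  shows "finite (TS_edges h F)"
proof -
  have "TS_edges h F \<subseteq>
      (\<lambda>(a, b, i). ((a, i), b \<circ> inv a, (b, Suc i))) ` (Sym n \<times> Sym n \<times> {..<h})"
  proof
    fix e assume "e \<in> TS_edges h F"
    then obtain p i where "p \<in> F" "i < h" and e: "e = ((p ! i, i), p ! Suc i \<circ> inv (p ! i), (p ! Suc i, Suc i))"
      unfolding TS_edges_def by blast
    then have "bedge' n (p ! i) (p ! Suc i)" using assms unfolding paths_def by blast
    then have "p ! i \<in> Sym n" "p ! Suc i \<in> Sym n" unfolding bedge'_def bedge_def by auto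
    with \<open>i < h\<close> show "e \<in> (\<lambda>(a, b, i). ((a, i), b \<circ> inv a, (b, Suc i))) ` (Sym n \<times> Sym n \<times> {..<h})"
      unfolding e by force
  qed
  moreover have "finite (Sym n)" unfolding Sym_def by (rule finite_permutations) simp
  ultimately show ?thesis by (auto intro: finite_subset)
qed

lemma two_le_card: "finite S \<Longrightarrow> a \<in> S \<Longrightarrow> b \<in> S \<Longrightarrow> a \<noteq> b \<Longrightarrow> 2 \<le> card S"
  using card_mono[of S "{a, b}"] by simp

lemma TS_indeg_ge_2:
  assumes F: "F \<subseteq> paths n h u v"
    and closed: "\<And>q j. q \<in> F \<Longrightarrow> j \<in> {1..h-1} \<Longrightarrow> flip_op n j q \<in> F"
    and "(x, i) \<in> TS_vertices h F" "1 < i"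
  shows "2 \<le> TS_indeg h F (x, i)"
proof -
  obtain q where q: "q \<in> F" "q ! i = x" and "i \<le> h"
    using assms(3) unfolding TS_vertices_def by blast
  define j where "j = i - 1"
  have j: "j \<in> {1..h-1}" "Suc j = i" using \<open>1 < i\<close> \<open>i \<le> h\<close> unfolding j_def by auto
  define q' where "q' = flip_op n j q"
  have "q' \<in> F" "q' ! j \<noteq> q ! j"
    unfolding q'_def using closed[OF q(1) j(1)] flip_op_in_paths(2)[OF subsetD[OF F q(1)] j(1)] by auto
  have "q' ! i = x" unfolding q'_def flip_op_def using q(2) j by simp
  let ?S = "{e \<in> TS_edges h F. snd (snd e) = (x, i)}"
  have "finite ?S" using finite_TS_edges[OF F] by simp
  moreover have edge: "((r ! j, j), x \<circ> inv (r ! j), (x, i)) \<in> ?S" if "r \<in> {q, q'}" for r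
    using that q j \<open>q' \<in> F\<close> \<open>q' ! i = x\<close> unfolding TS_edges_def by fastforce
  ultimately show ?thesis using \<open>q' ! j \<noteq> q ! j\<close>
    unfolding TS_indeg_def by (intro two_le_card[OF _ edge[of q] edge[of q']]) auto
qed

lemma TS_outdeg_ge_2:
  assumes F: "F \<subseteq> paths n h u v"
    and closed: "\<And>q j. q \<in> F \<Longrightarrow> j \<in> {1..h-1} \<Longrightarrow> flip_op n j q \<in> F"
    and "(x, i) \<in> TS_vertices h F" "i < h - 1"
  shows "2 \<le> TS_outdeg h F (x, i)"
proof -
  obtain q where q: "q \<in> F" "q ! i = x"
    using assms(3) unfolding TS_vertices_def by blast
  define j where "j = Suc i"
  have j: "j \<in> {1..h-1}" using \<open>i < h - 1\<close> unfolding j_def by auto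
  define q' where "q' = flip_op n j q"
  have "q' \<in> F" "q' ! j \<noteq> q ! j"
    unfolding q'_def using closed[OF q(1) j] flip_op_in_paths(2)[OF subsetD[OF F q(1)] j] by auto
  have "q' ! i = x" unfolding q'_def flip_op_def j_def using q(2) by simp
  let ?S = "{e \<in> TS_edges h F. fst e = (x, i)}"
  have "finite ?S" using finite_TS_edges[OF F] by simp
  moreover have edge: "((x, i), r ! j \<circ> inv x, (r ! j, j)) \<in> ?S" if "r \<in> {q, q'}" for r
    using that q \<open>q' \<in> F\<close> \<open>q' ! i = x\<close> \<open>i < h - 1\<close> unfolding TS_edges_def j_def by fastforce
  ultimately show ?thesis using \<open>q' ! j \<noteq> q ! j\<close>
    unfolding TS_outdeg_def by (intro two_le_card[OF _ edge[of q] edge[of q']]) auto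
qed

theorem lemma5p3:
  fixes n h :: nat and u v :: "nat \<Rightarrow> nat"
    and F :: "(nat \<Rightarrow> nat) list set"
  assumes "u \<in> Sym n" and "v \<in> Sym n"
    and "F \<in> flipclasses n h u v"
  shows "(\<forall>x i. (x, i) \<in> TS_vertices h F \<and> i > 1 \<longrightarrow> TS_indeg h F (x, i) \<ge> 2) \<and>
         (\<forall>x i. (x, i) \<in> TS_vertices h F \<and> i < h - 1 \<longrightarrow> TS_outdeg h F (x, i) \<ge> 2)"
proof -
  have F: "F \<subseteq> paths n h u v" using flipclass_subset_paths[OF assms(3)] .
  have closed: "\<And>q j. q \<in> F \<Longrightarrow> j \<in> {1..h-1} \<Longrightarrow> flip_op n j q \<in> F"
    using flipclass_flip_op_closed[OF assms(3)] .
  show ?thesis using TS_indeg_ge_2[OF F closed] TS_outdeg_ge_2[OF F closed] by blast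
qed

end
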